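(* Let $C = c_0c_1\dots c_{m-1}c_0$ and $D=(0)(1)\dots(n-1)(0)$ be reflexive digraph cycles with $D$ non-contractible. From any homomorphism $\phi \in \mathrm{Hom}(C,D)$ there is a path of up edges in $\mathrm{Hom}(C,D)$ to a monotone homomorphism.
   Context: A digraph is a binary relation $\to$ on a finite vertex set; reflexive means every vertex has a loop $uu$. A digraph cycle $C=c_0c_1\dots c_{m-1}c_0$ (indices mod $m$, $m\ge 3$) has underlying graph the cycle with edges $c_ic_{i+1}$; $D=(0)(1)\dots(n-1)(0)$ has vertex set the integers mod $n$. $D$ is non-contractible if it has length at least $4$ or is a directed $3$-cycle. A homomorphism $\phi: C\to D$ satisfies $u\to v\Rightarrow\phi(u)\to\phi(v)$. $\mathrm{Hom}(C,D)$ is the digraph on homomorphisms with $\phi\to\phi'$ iff $\phi(u)\to\phi'(v)$ for every arc $u\to v$ of $C$; adjacency means $\phi\to\phi'$ or $\phi'\to\phi$. For adjacent $\phi,\phi'$, a vertex $c$ moves up if $\phi'(c)=\phi(c)+1$, moves down if $\phi'(c)=\phi(c)-1$; $(\phi,\phi')$ is an up edge if they are adjacent and every vertex that moves, moves up; a path of up edges from $\phi$ to $\phi'$ is a sequence $\phi=\phi_0,\dots,\phi_k=\phi'$ of up edges $(\phi_j,\phi_{j+1})$. Under $\phi$, edge $c_ic_{i+1}$ is increasing, stationary or decreasing as $\phi(c_{i+1})-\phi(c_i)$ is $1,0,-1$ (mod $n$). A homomorphism is monotone if either every edge is increasing or stationary, or every edge is decreasing or stationary (in particular constant maps are monotone).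 *)

theory Defs
  imports Main
begin

text \<open>Vertex i stands for c_i,
  and the successor of i around the cycle is Suc i mod m.\<close>

definition cyc_succ :: "nat \<Rightarrow> nat \<Rightarrow> nat" where
  "cyc_succ m i = Suc i mod m"

definition digraph_cycle :: "nat \<Rightarrow> (nat \<Rightarrow> nat \<Rightarrow> bool) \<Rightarrow> bool" where
  "digraph_cycle m R \<longleftrightarrow> m \<ge> 3
     \<and> (\<forall>u v. R u v \<longrightarrow> u < m \<and> v < m)
     \<and> (\<forall>i<m. R i (cyc_succ m i) \<or> R (cyc_succ m i) i)
     \<and> (\<forall>u v. R u v \<longrightarrow> u = v \<or> v = cyc_succ m u \<or> u = cyc_succ m v)"

definition reflexive_digraph :: "nat \<Rightarrow> (nat \<Rightarrow> nat \<Rightarrow> bool) \<Rightarrow> bool" where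
  "reflexive_digraph m R \<longleftrightarrow> (\<forall>u<m. R u u)"

definition directed_3cycle :: "(nat \<Rightarrow> nat \<Rightarrow> bool) \<Rightarrow> bool" where
  "directed_3cycle S \<longleftrightarrow>
     (\<forall>i<3. S i (cyc_succ 3 i) \<and> \<not> S (cyc_succ 3 i) i)
   \<or> (\<forall>i<3. S (cyc_succ 3 i) i \<and> \<not> S i (cyc_succ 3 i))"

definition non_contractible :: "nat \<Rightarrow> (nat \<Rightarrow> nat \<Rightarrow> bool) \<Rightarrow> bool" where
  "non_contractible n S \<longleftrightarrow> n \<ge> 4 \<or> (n = 3 \<and> directed_3cycle S)"

definition is_hom :: "nat \<Rightarrow> (nat \<Rightarrow> nat \<Rightarrow> bool) \<Rightarrow> nat \<Rightarrow> (nat \<Rightarrow> nat \<Rightarrow> bool)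
    \<Rightarrow> (nat \<Rightarrow> nat) \<Rightarrow> bool" where
  "is_hom m R n S \<phi> \<longleftrightarrow> (\<forall>u<m. \<phi> u < n) \<and> (\<forall>u v. R u v \<longrightarrow> S (\<phi> u) (\<phi> v))"

definition hom_arc :: "(nat \<Rightarrow> nat \<Rightarrow> bool) \<Rightarrow> (nat \<Rightarrow> nat \<Rightarrow> bool)
    \<Rightarrow> (nat \<Rightarrow> nat) \<Rightarrow> (nat \<Rightarrow> nat) \<Rightarrow> bool" where
  "hom_arc R S \<phi> \<psi> \<longleftrightarrow> (\<forall>u v. R u v \<longrightarrow> S (\<phi> u) (\<psi> v))"

definition hom_adjacent :: "(nat \<Rightarrow> nat \<Rightarrow> bool) \<Rightarrow> (nat \<Rightarrow> nat \<Rightarrow> bool)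
    \<Rightarrow> (nat \<Rightarrow> nat) \<Rightarrow> (nat \<Rightarrow> nat) \<Rightarrow> bool" where
  "hom_adjacent R S \<phi> \<psi> \<longleftrightarrow> hom_arc R S \<phi> \<psi> \<or> hom_arc R S \<psi> \<phi>"

definition up_edge :: "nat \<Rightarrow> (nat \<Rightarrow> nat \<Rightarrow> bool) \<Rightarrow> nat \<Rightarrow> (nat \<Rightarrow> nat \<Rightarrow> bool)
    \<Rightarrow> (nat \<Rightarrow> nat) \<Rightarrow> (nat \<Rightarrow> nat) \<Rightarrow> bool" where
  "up_edge m R n S \<phi> \<psi> \<longleftrightarrow> is_hom m R n S \<phi> \<and> is_hom m R n S \<psi>
     \<and> hom_adjacent R S \<phi> \<psi>
     \<and> (\<forall>c<m. \<psi> c \<noteq> \<phi> c \<longrightarrow> \<psi> c = (\<phi> c + 1) mod n)"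

definition monotone_hom :: "nat \<Rightarrow> nat \<Rightarrow> (nat \<Rightarrow> nat) \<Rightarrow> bool" where
  "monotone_hom m n \<phi> \<longleftrightarrow>
     (\<forall>i<m. (\<phi> (cyc_succ m i) + n - \<phi> i) mod n \<in> {0, 1 mod n})
   \<or> (\<forall>i<m. (\<phi> (cyc_succ m i) + n - \<phi> i) mod n \<in> {0, (n - 1) mod n})"

end

theory Submission
  imports Defs
begin

text \<open>Induct on the number of edges of C that \<phi> does not map to a loop. A non-monotone \<phi> has
  both an increasing and a decreasing edge. Going around C, a closest pair "decreasing edge, then
  increasing edge" encloses an arc P of C on which \<phi> is constant, say x, while the two vertices
  just outside P are mapped to x+1. Moving P up to x+1 is an up edge of Hom(C,D) that makes the two
  edges at the ends of P stationary and creates no new non-stationary edge.\<close>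

definition increasing_edge :: "nat \<Rightarrow> nat \<Rightarrow> (nat \<Rightarrow> nat) \<Rightarrow> nat \<Rightarrow> bool" where
  "increasing_edge m n \<phi> i \<longleftrightarrow> \<phi> (cyc_succ m i) = Suc (\<phi> i) mod n"

definition decreasing_edge :: "nat \<Rightarrow> nat \<Rightarrow> (nat \<Rightarrow> nat) \<Rightarrow> nat \<Rightarrow> bool" where
  "decreasing_edge m n \<phi> i \<longleftrightarrow> \<phi> i = Suc (\<phi> (cyc_succ m i)) mod n"

definition nonstationary_edges :: "nat \<Rightarrow> (nat \<Rightarrow> nat) \<Rightarrow> nat set" where
  "nonstationary_edges m \<phi> = {i. i < m \<and> \<phi> (cyc_succ m i) \<noteq> \<phi> i}"

definition border_value :: "nat \<Rightarrow> (nat \<Rightarrow> nat) \<Rightarrow> nat set \<Rightarrow> nat \<Rightarrow> bool" where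
  "border_value m \<phi> P y \<longleftrightarrow>
     (\<forall>i<m. i \<in> P \<longrightarrow> cyc_succ m i \<notin> P \<longrightarrow> \<phi> (cyc_succ m i) = y)
   \<and> (\<forall>i<m. cyc_succ m i \<in> P \<longrightarrow> i \<notin> P \<longrightarrow> \<phi> i = y)"

lemma cyc_succ_less: "i < m \<Longrightarrow> cyc_succ m i < m"
  by (simp add: cyc_succ_def)

lemma cyc_succ_add_mod: "cyc_succ m ((p + s) mod m) = (p + Suc s) mod m"
  by (simp add: cyc_succ_def mod_Suc_eq)

lemma cyc_succ_inj:
  assumes "i < m" "j < m" "cyc_succ m i = cyc_succ m j"
  shows "i = j"
  using assms unfolding cyc_succ_def
  by (cases "Suc i = m"; cases "Suc j = m") auto

lemma Suc_mod_minus_mod: "a < n \<Longrightarrow> (Suc a mod n + n - a) mod n = 1 mod n"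
  by (cases "Suc a = n") (auto simp: mod_Suc)

lemma minus_Suc_mod_mod: "b < n \<Longrightarrow> (b + n - Suc b mod n) mod n = (n - 1) mod n"
  by (cases "Suc b = n") auto

lemma monotone_homI_increasing:
  assumes "\<forall>i<m. \<phi> i < n"
    and "\<forall>i<m. \<phi> (cyc_succ m i) = \<phi> i \<or> increasing_edge m n \<phi> i"
  shows "monotone_hom m n \<phi>"
  using assms by (auto simp: monotone_hom_def increasing_edge_def Suc_mod_minus_mod)

lemma monotone_homI_decreasing:
  assumes "\<forall>i<m. \<phi> i < n"
    and "\<forall>i<m. \<phi> (cyc_succ m i) = \<phi> i \<or> decreasing_edge m n \<phi> i"
  shows "monotone_hom m n \<phi>"
  using assms cyc_succ_less
  by (auto simp: monotone_hom_def decreasing_edge_def minus_Suc_mod_mod)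

lemma finite_nonstationary_edges: "finite (nonstationary_edges m \<phi>)"
  by (simp add: nonstationary_edges_def)

lemma nonstationary_edges_raise_psubset:
  assumes const: "\<forall>c\<in>P. \<phi> c = x" and "x \<noteq> y"
    and border: "border_value m \<phi> P y"
    and p: "p < m" "cyc_succ m p \<in> P" "\<phi> p = y"
  shows "nonstationary_edges m (\<lambda>c. if c \<in> P then y else \<phi> c) \<subset> nonstationary_edges m \<phi>"
proof -
  have "p \<notin> P" using const p(3) \<open>x \<noteq> y\<close> by auto
  then have "p \<in> nonstationary_edges m \<phi> - nonstationary_edges m (\<lambda>c. if c \<in> P then y else \<phi> c)"
    using p const \<open>x \<noteq> y\<close> by (auto simp: nonstationary_edges_def)
  moreover have "nonstationary_edges m (\<lambda>c. if c \<in> P then y else \<phi> c) \<subseteq> nonstationary_edges m \<phi>"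
    using const border by (auto simp: nonstationary_edges_def border_value_def split: if_splits)
  ultimately show ?thesis by blast
qed

lemma plateau_between_decreasing_increasing:
  assumes p: "p < m" "0 < t" "decreasing_edge m n \<phi> p"
    and incr: "increasing_edge m n \<phi> ((p + t) mod m)"
    and flat: "\<And>s. 0 < s \<Longrightarrow> s < t \<Longrightarrow> \<phi> ((p + Suc s) mod m) = \<phi> ((p + s) mod m)"
  defines "P \<equiv> {(p + s) mod m | s. 1 \<le> s \<and> s \<le> t}" and "x \<equiv> \<phi> ((p + 1) mod m)"
  shows "\<forall>c\<in>P. \<phi> c = x" and "border_value m \<phi> P (Suc x mod n)"
    and "cyc_succ m p \<in> P" and "\<phi> p = Suc x mod n"
proof -
  have plateau: "\<phi> ((p + s) mod m) = x" if "1 \<le> s" "s \<le> t" for s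
    using that
  proof (induction s)
    case (Suc s)
    then show ?case using flat[of s] by (cases "s = 0") (simp_all add: x_def)
  qed simp
  then show "\<forall>c\<in>P. \<phi> c = x" by (auto simp: P_def)
  have succ_p: "cyc_succ m p = (p + 1) mod m" by (simp add: cyc_succ_def)
  then show "cyc_succ m p \<in> P" using p(2) unfolding P_def by (intro CollectI exI[of _ 1]) simp
  show p_val: "\<phi> p = Suc x mod n"
    using p(3) by (simp add: decreasing_edge_def succ_p x_def)
  have "\<phi> (cyc_succ m c) = Suc x mod n" if "c \<in> P" "cyc_succ m c \<notin> P" for c
  proof -
    obtain s where s: "c = (p + s) mod m" "1 \<le> s" "s \<le> t" using \<open>c \<in> P\<close> by (auto simp: P_def)
    have "s = t"
    proof (rule ccontr)
      assume "s \<noteq> t"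
      then have "cyc_succ m c \<in> P" using s
        unfolding P_def by (intro CollectI exI[of _ "Suc s"]) (simp add: cyc_succ_add_mod)
      with that show False by blast
    qed
    then show ?thesis using incr plateau[of t] p(2) s(1) by (simp add: increasing_edge_def)
  qed
  moreover have "\<phi> c = Suc x mod n" if "c < m" "cyc_succ m c \<in> P" "c \<notin> P" for c
  proof -
    obtain s where s: "cyc_succ m c = (p + s) mod m" "1 \<le> s" "s \<le> t"
      using \<open>cyc_succ m c \<in> P\<close> by (auto simp: P_def)
    have "cyc_succ m ((p + (s - 1)) mod m) = cyc_succ m c"
      using s cyc_succ_add_mod[of m p "s - 1"] by simp
    moreover have "(p + (s - 1)) mod m < m" using p(1) by simp
    ultimately have c_eq: "c = (p + (s - 1)) mod m"
      using cyc_succ_inj \<open>c < m\<close> by metis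
    show ?thesis
    proof (cases "s = 1")
      case True
      then show ?thesis using c_eq p(1) p_val by simp
    next
      case False
      then have "c \<in> P" using c_eq s unfolding P_def by (intro CollectI exI[of _ "s - 1"]) auto
      with \<open>c \<notin> P\<close> show ?thesis by blast
    qed
  qed
  ultimately show "border_value m \<phi> P (Suc x mod n)" by (simp add: border_value_def)
qed

locale cycle_homs =
  fixes m :: nat and R :: "nat \<Rightarrow> nat \<Rightarrow> bool" and n :: nat and S :: "nat \<Rightarrow> nat \<Rightarrow> bool"
  assumes source_cycle: "digraph_cycle m R"
    and target_cycle: "digraph_cycle n S"
    and target_reflexive: "reflexive_digraph n S"
begin

lemma source_arcD: "R u v \<Longrightarrow> u < m \<and> v < m \<and> (u = v \<or> v = cyc_succ m u \<or> u = cyc_succ m v)"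
  using source_cycle by (simp add: digraph_cycle_def)

lemma target_arcD: "S u v \<Longrightarrow> u = v \<or> v = Suc u mod n \<or> u = Suc v mod n"
  using target_cycle by (simp add: digraph_cycle_def cyc_succ_def)

lemma target_arc_Suc: "x < n \<Longrightarrow> S x (Suc x mod n) \<or> S (Suc x mod n) x"
  using target_cycle by (simp add: digraph_cycle_def cyc_succ_def)

lemma Suc_mod_target_neq: "x < n \<Longrightarrow> Suc x mod n \<noteq> x"
  using target_cycle by (cases "Suc x = n") (auto simp: digraph_cycle_def)

lemma hom_edge_cases:
  assumes "is_hom m R n S \<phi>" "i < m"
  shows "\<phi> (cyc_succ m i) = \<phi> i \<or> increasing_edge m n \<phi> i \<or> decreasing_edge m n \<phi> i"
proof -
  from source_cycle \<open>i < m\<close> have "R i (cyc_succ m i) \<or> R (cyc_succ m i) i"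
    by (simp add: digraph_cycle_def)
  with assms(1) have "S (\<phi> i) (\<phi> (cyc_succ m i)) \<or> S (\<phi> (cyc_succ m i)) (\<phi> i)"
    by (auto simp: is_hom_def)
  then show ?thesis
    unfolding increasing_edge_def decreasing_edge_def by (auto dest: target_arcD)
qed

lemma nonmonotone_hom_has_decreasing_and_increasing_edge:
  assumes hom: "is_hom m R n S \<phi>" and "\<not> monotone_hom m n \<phi>"
  obtains i j where "i < m" "decreasing_edge m n \<phi> i" "j < m" "increasing_edge m n \<phi> j"
proof -
  have range: "\<forall>i<m. \<phi> i < n" using hom by (simp add: is_hom_def)
  have "\<exists>i<m. decreasing_edge m n \<phi> i"
    using hom_edge_cases[OF hom] monotone_homI_increasing[OF range] assms(2) by blast
  moreover have "\<exists>j<m. increasing_edge m n \<phi> j"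
    using hom_edge_cases[OF hom] monotone_homI_decreasing[OF range] assms(2) by blast
  ultimately show thesis using that by blast
qed

lemma raise_plateau_hom_adjacent:
  assumes hom: "is_hom m R n S \<phi>" and "y < n" and xy: "S x y \<or> S y x"
    and const: "\<forall>c\<in>P. \<phi> c = x"
    and border: "border_value m \<phi> P y"
  defines "\<psi> \<equiv> \<lambda>c. if c \<in> P then y else \<phi> c"
  shows "is_hom m R n S \<psi>" and "hom_adjacent R S \<phi> \<psi>"
proof -
  have yy: "S y y" using target_reflexive \<open>y < n\<close> by (simp add: reflexive_digraph_def)
  have arc: "S (\<phi> u) (\<phi> v)" if "R u v" for u v
    using hom that by (simp add: is_hom_def)
  have leave: "\<phi> v = y" if "R u v" "u \<in> P" "v \<notin> P" for u v
    using source_arcD[OF \<open>R u v\<close>] border that by (auto simp: border_value_def)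
  have enter: "\<phi> u = y" if "R u v" "v \<in> P" "u \<notin> P" for u v
    using source_arcD[OF \<open>R u v\<close>] border that by (auto simp: border_value_def)
  show "is_hom m R n S \<psi>"
    using hom \<open>y < n\<close> arc leave enter yy by (auto simp: is_hom_def \<psi>_def)
  have "S (\<phi> u) (\<psi> v)" if "S x y" "R u v" for u v
    using that arc leave enter yy const by (cases "u \<in> P"; cases "v \<in> P") (auto simp: \<psi>_def)
  moreover have "S (\<psi> u) (\<phi> v)" if "S y x" "R u v" for u v
    using that arc leave enter yy const by (cases "u \<in> P"; cases "v \<in> P") (auto simp: \<psi>_def)
  ultimately show "hom_adjacent R S \<phi> \<psi>"
    using xy by (auto simp: hom_adjacent_def hom_arc_def)
qed

lemma raise_plateau_up_edge:
  assumes hom: "is_hom m R n S \<phi>" and "x < n"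
    and const: "\<forall>c\<in>P. \<phi> c = x"
    and border: "border_value m \<phi> P (Suc x mod n)"
  shows "up_edge m R n S \<phi> (\<lambda>c. if c \<in> P then Suc x mod n else \<phi> c)"
proof -
  have "Suc x mod n < n" using \<open>x < n\<close> by simp
  from raise_plateau_hom_adjacent[OF hom this target_arc_Suc[OF \<open>x < n\<close>] const border]
  show ?thesis using hom const by (auto simp: up_edge_def)
qed

lemma closest_decreasing_increasing_pair:
  assumes hom: "is_hom m R n S \<phi>"
    and i: "i < m" "decreasing_edge m n \<phi> i" and j: "j < m" "increasing_edge m n \<phi> j"
  obtains p t where "p < m" "0 < t" "decreasing_edge m n \<phi> p"
    "increasing_edge m n \<phi> ((p + t) mod m)"
    "\<And>s. 0 < s \<Longrightarrow> s < t \<Longrightarrow> \<phi> ((p + Suc s) mod m) = \<phi> ((p + s) mod m)"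
proof -
  define Q where "Q t \<longleftrightarrow> 0 < t \<and>
    (\<exists>p<m. decreasing_edge m n \<phi> p \<and> increasing_edge m n \<phi> ((p + t) mod m))" for t
  have "(i + (j + m - i)) mod m = j" using i j by simp
  then have "Q (j + m - i)" unfolding Q_def using i j by auto
  then obtain t where "Q t" and t_least: "\<And>s. s < t \<Longrightarrow> \<not> Q s"
    using exists_least_iff[of Q] by blast
  then obtain p where p: "p < m" "0 < t" "decreasing_edge m n \<phi> p"
    "increasing_edge m n \<phi> ((p + t) mod m)"
    unfolding Q_def by blast
  have "\<phi> ((p + Suc s) mod m) = \<phi> ((p + s) mod m)" if s: "0 < s" "s < t" for s
  proof -
    \<comment> \<open>An increasing edge at p + s would pair with p, a decreasing one with p + t,
      at a distance less than t.\<close>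
    have "(p + s) mod m < m" using p(1) by simp
    from hom_edge_cases[OF hom this] consider
        "\<phi> (cyc_succ m ((p + s) mod m)) = \<phi> ((p + s) mod m)"
      | "increasing_edge m n \<phi> ((p + s) mod m)"
      | "decreasing_edge m n \<phi> ((p + s) mod m)"
      by blast
    then show ?thesis
    proof cases
      case 1
      then show ?thesis by (simp add: cyc_succ_add_mod)
    next
      case 2
      then have "Q s" unfolding Q_def using p s by auto
      with t_least s show ?thesis by blast
    next
      case 3
      have "((p + s) mod m + (t - s)) mod m = (p + s + (t - s)) mod m"
        by (rule mod_add_left_eq)
      also have "p + s + (t - s) = p + t" using s by simp
      finally have "((p + s) mod m + (t - s)) mod m = (p + t) mod m" .
      then have "Q (t - s)" unfolding Q_def using p s 3
        by (intro conjI exI[of _ "(p + s) mod m"]) auto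
      with t_least s show ?thesis by simp
    qed
  qed
  with p that show thesis by blast
qed

lemma nonmonotone_hom_up_edge_fewer_nonstationary:
  assumes hom: "is_hom m R n S \<phi>" and "\<not> monotone_hom m n \<phi>"
  obtains \<psi> where "up_edge m R n S \<phi> \<psi>"
    "card (nonstationary_edges m \<psi>) < card (nonstationary_edges m \<phi>)"
proof -
  obtain i j where "i < m" "decreasing_edge m n \<phi> i" "j < m" "increasing_edge m n \<phi> j"
    using nonmonotone_hom_has_decreasing_and_increasing_edge[OF assms] .
  then obtain p t where p: "p < m" "0 < t" "decreasing_edge m n \<phi> p"
    "increasing_edge m n \<phi> ((p + t) mod m)"
    "\<And>s. 0 < s \<Longrightarrow> s < t \<Longrightarrow> \<phi> ((p + Suc s) mod m) = \<phi> ((p + s) mod m)"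
    using closest_decreasing_increasing_pair[OF hom] by metis
  define P where "P = {(p + s) mod m | s. 1 \<le> s \<and> s \<le> t}"
  define x where "x = \<phi> ((p + 1) mod m)"
  note plateau = plateau_between_decreasing_increasing[OF p, folded P_def x_def]
  have "x < n" using hom p(1) by (simp add: is_hom_def x_def)
  have "x \<noteq> Suc x mod n" using Suc_mod_target_neq[OF \<open>x < n\<close>] by simp
  from nonstationary_edges_raise_psubset[OF plateau(1) this plateau(2) p(1) plateau(3,4)]
  have "card (nonstationary_edges m (\<lambda>c. if c \<in> P then Suc x mod n else \<phi> c))
    < card (nonstationary_edges m \<phi>)"
    by (simp add: psubset_card_mono finite_nonstationary_edges)
  with raise_plateau_up_edge[OF hom \<open>x < n\<close> plateau(1,2)] that show thesis by blast
qed

lemma up_path_to_monotone_hom: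
  assumes "is_hom m R n S \<phi>"
  shows "\<exists>k (f :: nat \<Rightarrow> nat \<Rightarrow> nat). f 0 = \<phi>
           \<and> (\<forall>j<k. up_edge m R n S (f j) (f (Suc j)))
           \<and> monotone_hom m n (f k)"
  using assms
proof (induction "card (nonstationary_edges m \<phi>)" arbitrary: \<phi> rule: less_induct)
  case less
  show ?case
  proof (cases "monotone_hom m n \<phi>")
    case True
    then show ?thesis by (intro exI[of _ 0] exI[of _ "\<lambda>_. \<phi>"]) simp
  next
    case False
    obtain \<psi> where up: "up_edge m R n S \<phi> \<psi>"
      and fewer: "card (nonstationary_edges m \<psi>) < card (nonstationary_edges m \<phi>)"
      using nonmonotone_hom_up_edge_fewer_nonstationary[OF less.prems False] .
    have "is_hom m R n S \<psi>" using up by (simp add: up_edge_def)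
    then obtain k f where "f 0 = \<psi>" "\<forall>j<k. up_edge m R n S (f j) (f (Suc j))"
      "monotone_hom m n (f k)"
      using less.hyps[OF fewer] by blast
    with up have "case_nat \<phi> f 0 = \<phi>"
      "\<forall>j<Suc k. up_edge m R n S (case_nat \<phi> f j) (case_nat \<phi> f (Suc j))"
      "monotone_hom m n (case_nat \<phi> f (Suc k))"
      by (auto simp: less_Suc_eq_0_disj)
    then show ?thesis by blast
  qed
qed

end

theorem corollary2p3:
  fixes m n :: nat and R S :: "nat \<Rightarrow> nat \<Rightarrow> bool" and \<phi> :: "nat \<Rightarrow> nat"
  assumes "digraph_cycle m R" and "reflexive_digraph m R"
    and "digraph_cycle n S" and "reflexive_digraph n S"
    and "non_contractible n S"
    and "is_hom m R n S \<phi>"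
  shows "\<exists>k (f :: nat \<Rightarrow> nat \<Rightarrow> nat). f 0 = \<phi>
           \<and> (\<forall>j<k. up_edge m R n S (f j) (f (Suc j)))
           \<and> monotone_hom m n (f k)"
proof -
  interpret cycle_homs m R n S
    using assms(1,3,4) by unfold_locales
  show ?thesis using up_path_to_monotone_hom[OF assms(6)] .
qed

end
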